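(* Let $n\ge2$, $\mathbf p^0\in\Delta_n$, $\mathbf p^{t+1}=F(\mathbf p^t)$. Then the sequence $L^t=\sum_{k=1}^n(p^t_k)^2$, $t=0,1,\dots$, is (non-strictly) decreasing: $L^{t+1}\le L^t$ for all $t$.
   Context: $\Delta_n=\{\mathbf p\in\mathbb R^n: p_i\ge 0,\ \sum_i p_i=1\}$. For $\mathbf p\in\Delta_n$, $L(\mathbf p)=\sum_{k}p_k^2$ and $F(\mathbf p)_i=p_i\frac{n-p_i}{n-L(\mathbf p)}$. *)

theory Defs
  imports Complex_Main
begin

text \<open>Vectors in R^n are represented as functions nat => real; only indices 0..n-1 matter.\<close>

definition simplex :: "nat \<Rightarrow> (nat \<Rightarrow> real) set" where
  "simplex n = {p. (\<forall>i<n. p i \<ge> 0) \<and> (\<Sum>i<n. p i) = 1}"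

definition Lfun :: "nat \<Rightarrow> (nat \<Rightarrow> real) \<Rightarrow> real" where
  "Lfun n p = (\<Sum>k<n. (p k)^2)"

definition Fmap :: "nat \<Rightarrow> (nat \<Rightarrow> real) \<Rightarrow> (nat \<Rightarrow> real)" where
  "Fmap n p = (\<lambda>i. p i * (real n - p i) / (real n - Lfun n p))"

end

theory Submission
  imports Defs
begin

text \<open>With \<open>L = Lfun n p\<close> and \<open>g x = x (n - x)\<^sup>2\<close>, one has
  \<open>Lfun n (Fmap n p) = (\<Sum>i. p\<^sub>i g(p\<^sub>i)) / (n - L)\<^sup>2\<close>, a \<open>p\<close>-weighted average of \<open>g\<close> over the values
  \<open>p\<^sub>i\<close>, whose \<open>p\<close>-weighted mean is \<open>L\<close>. On \<open>[0, 1]\<close> the cubic \<open>g\<close> lies below its tangent at \<open>L\<close>,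
  so Jensen's inequality bounds the average by \<open>g L = L (n - L)\<^sup>2\<close>.\<close>

lemma weighted_sum_le_of_tangent:
  fixes w x :: "'a \<Rightarrow> real" and f :: "real \<Rightarrow> real"
  assumes "finite A" and "\<And>i. i \<in> A \<Longrightarrow> w i \<ge> 0" and "sum w A = 1"
    and "m = (\<Sum>i\<in>A. w i * x i)"
    and "\<And>i. i \<in> A \<Longrightarrow> f (x i) \<le> f m + d * (x i - m)"
  shows "(\<Sum>i\<in>A. w i * f (x i)) \<le> f m"
proof -
  have "(\<Sum>i\<in>A. w i * f (x i)) \<le> (\<Sum>i\<in>A. w i * (f m + d * (x i - m)))"
    using assms(2,5) by (intro sum_mono mult_left_mono) auto
  also have "\<dots> = f m * sum w A + d * ((\<Sum>i\<in>A. w i * x i) - m * sum w A)"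
    by (simp add: algebra_simps sum.distrib sum_distrib_left sum_subtractf)
  also have "\<dots> = f m"
    using assms(3,4) by simp
  finally show ?thesis .
qed

lemma cubic_le_tangent:
  fixes a c x :: real
  assumes "x + 2 * a \<le> 2 * c"
  shows "x * (c - x)\<^sup>2 \<le> a * (c - a)\<^sup>2 + ((c - a)\<^sup>2 - 2 * a * (c - a)) * (x - a)"
proof -
  have "a * (c - a)\<^sup>2 + ((c - a)\<^sup>2 - 2 * a * (c - a)) * (x - a) - x * (c - x)\<^sup>2
      = (x - a)\<^sup>2 * (2 * c - x - 2 * a)"
    by (simp add: algebra_simps power2_eq_square)
  moreover have "(x - a)\<^sup>2 * (2 * c - x - 2 * a) \<ge> 0"
    using assms by simp
  ultimately show ?thesis by linarith
qed

lemma simplex_nonneg: "p \<in> simplex n \<Longrightarrow> i < n \<Longrightarrow> 0 \<le> p i"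
  by (simp add: simplex_def)

lemma simplex_le_one:
  assumes "p \<in> simplex n" and "i < n"
  shows "p i \<le> 1"
proof -
  have "p i \<le> (\<Sum>j<n. p j)"
    using assms by (intro member_le_sum) (auto simp: simplex_nonneg)
  then show ?thesis
    using assms(1) by (simp add: simplex_def)
qed

lemma Lfun_le_one:
  assumes "p \<in> simplex n"
  shows "Lfun n p \<le> 1"
proof -
  have "Lfun n p \<le> (\<Sum>i<n. p i)"
    unfolding Lfun_def power2_eq_square
    using assms by (intro sum_mono mult_left_le) (auto simp: simplex_nonneg simplex_le_one)
  then show ?thesis
    using assms by (simp add: simplex_def)
qed

lemma Lfun_eq_sum_mult_self: "Lfun n p = (\<Sum>i<n. p i * p i)"
  by (simp add: Lfun_def power2_eq_square)

lemma sum_mult_complement: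
  assumes "p \<in> simplex n"
  shows "(\<Sum>i<n. p i * (real n - p i)) = real n - Lfun n p"
proof -
  have "(\<Sum>i<n. p i * (real n - p i)) = real n * (\<Sum>i<n. p i) - Lfun n p"
    by (simp add: Lfun_eq_sum_mult_self algebra_simps sum_subtractf sum_distrib_left)
  then show ?thesis
    using assms by (simp add: simplex_def)
qed

lemma Fmap_normalizer_pos:
  assumes "n \<ge> 2" and "p \<in> simplex n"
  shows "0 < real n - Lfun n p"
  using assms Lfun_le_one[OF assms(2)] by linarith

lemma Fmap_in_simplex:
  assumes "n \<ge> 2" and "p \<in> simplex n"
  shows "Fmap n p \<in> simplex n"
proof -
  have D: "0 < real n - Lfun n p"
    using assms by (rule Fmap_normalizer_pos)
  have "0 \<le> Fmap n p i" if "i < n" for i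
  proof -
    have "p i \<le> real n"
      using simplex_le_one[OF assms(2) that] assms(1) by linarith
    then show ?thesis
      using D simplex_nonneg[OF assms(2) that] by (simp add: Fmap_def)
  qed
  moreover have "(\<Sum>i<n. Fmap n p i) = 1"
    using D sum_mult_complement[OF assms(2)]
    by (simp add: Fmap_def sum_divide_distrib[symmetric])
  ultimately show ?thesis
    by (simp add: simplex_def)
qed

lemma Lfun_Fmap:
  "Lfun n (Fmap n p) = (\<Sum>i<n. p i * (p i * (real n - p i)\<^sup>2)) / (real n - Lfun n p)\<^sup>2"
  by (simp add: Lfun_def Fmap_def sum_divide_distrib power_divide power_mult_distrib
      power2_eq_square algebra_simps)

lemma Lfun_Fmap_le:
  assumes "n \<ge> 2" and "p \<in> simplex n"
  shows "Lfun n (Fmap n p) \<le> Lfun n p"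
proof -
  define L where "L = Lfun n p"
  define g where "g x = x * (real n - x)\<^sup>2" for x
  have D: "0 < real n - L"
    unfolding L_def using assms by (rule Fmap_normalizer_pos)
  have "(\<Sum>i<n. p i * g (p i)) \<le> g L"
  proof (rule weighted_sum_le_of_tangent[where w = p and x = p])
    show "sum p {..<n} = 1" and "\<And>i. i \<in> {..<n} \<Longrightarrow> 0 \<le> p i"
      using assms(2) by (auto simp: simplex_def)
    show "L = (\<Sum>i<n. p i * p i)"
      by (simp add: L_def Lfun_eq_sum_mult_self)
    show "g (p i) \<le> g L + ((real n - L)\<^sup>2 - 2 * L * (real n - L)) * (p i - L)"
      if "i \<in> {..<n}" for i
    proof -
      have "p i \<le> 1" and "L \<le> 1" and "2 \<le> real n"
        using that assms simplex_le_one[OF assms(2)] Lfun_le_one[OF assms(2)]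
        by (auto simp: L_def)
      then have "p i + 2 * L \<le> 2 * real n"
        by linarith
      then show ?thesis
        unfolding g_def by (rule cubic_le_tangent)
    qed
  qed simp
  then have "Lfun n (Fmap n p) \<le> g L / (real n - L)\<^sup>2"
    unfolding Lfun_Fmap L_def[symmetric] g_def by (rule divide_right_mono) simp
  also have "\<dots> = L"
    using D by (simp add: g_def)
  finally show ?thesis
    by (simp add: L_def)
qed

theorem lemma1:
  fixes n :: nat and p :: "nat \<Rightarrow> nat \<Rightarrow> real"
  assumes "n \<ge> 2"
    and "p 0 \<in> simplex n"
    and "\<And>t. p (Suc t) = Fmap n (p t)"
  shows "\<forall>t. Lfun n (p (Suc t)) \<le> Lfun n (p t)"
proof
  fix t
  have "p t \<in> simplex n"
    by (induction t) (use assms Fmap_in_simplex in auto)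
  then show "Lfun n (p (Suc t)) \<le> Lfun n (p t)"
    using assms Lfun_Fmap_le by simp
qed

end
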